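(* Let $p$ be a prime, let $m\geq 2$ be an integer with $\gcd(p,m)=1$, and let $k$ be a nonnegative integer. Then $$\Psi_{p^km}(x)\equiv \Psi_m(x)^{\varphi(p^k)}\pmod p,$$ i.e., the congruence holds coefficientwise in $\mathbb{Z}[x]$.
   Context: The Fibonacci polynomials are defined by $F_1(x)=1$, $F_2(x)=x$, and $F_n(x)=xF_{n-1}(x)+F_{n-2}(x)$ for $n\geq 3$. For $n\geq 2$, the $n$-th fibotomic polynomial $\Psi_n(x)\in\mathbb{Z}[x]$ is the product of the monic irreducible factors of $F_n(x)$ which are not factors of $F_k(x)$ for any $k<n$; also $\Psi_1(x)=1$. $\varphi$ is Euler's totient function. *)

theory Defs
  imports "HOL-Computational_Algebra.Computational_Algebra" "HOL-Number_Theory.Cong" "HOL-Number_Theory.Totient"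
begin

fun fibpoly :: "nat \<Rightarrow> int poly" where
  "fibpoly 0 = 0"
| "fibpoly (Suc 0) = 1"
| "fibpoly (Suc (Suc n)) = [:0, 1:] * fibpoly (Suc n) + fibpoly n"

definition fibotomic :: "nat \<Rightarrow> int poly" where
  "fibotomic n = (if n \<le> 1 then 1 else
     \<Prod> {q :: int poly. irreducible q \<and> lead_coeff q = 1 \<and> q dvd fibpoly n \<and>
                        (\<forall>k. 1 \<le> k \<and> k < n \<longrightarrow> \<not> q dvd fibpoly k)})"

end

theory Submission
  imports Defs
begin

text \<open>Every prime factor \<open>q\<close> of \<open>F_n\<close> has a rank of apparition \<open>d\<close>, the least index with
  \<open>q | F_d\<close>, and \<open>d | n\<close>; as \<open>F_n\<close> is monic and squarefree, \<open>F_n = \<Prod>_{d|n} \<Psi>_d\<close>.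
  In \<open>\<int>[x][\<alpha>]\<close> with \<open>\<alpha>^2 = x\<alpha> + 1\<close> one has \<open>\<alpha>^n = F_n \<alpha> + F_{n-1}\<close>, and expanding
  \<open>\<alpha>^{pj} = (F_j \<alpha> + F_{j-1})^p\<close> gives \<open>F_{pj} \<equiv> F_j^p F_p (mod p)\<close>.
  For \<open>n\<close> prime to \<open>p\<close>, \<open>\<Prod>_{d|n} \<Psi>_{pd} = F_{pn} / F_n\<close> and
  \<open>\<Prod>_{d|n} \<Psi>_{p^{k+1}d} = F_{p^{k+1}n} / F_{p^k n}\<close>, so these products are congruent to
  \<open>F_p F_n^{p-1}\<close> and, for \<open>k \<ge> 1\<close>, to \<open>(\<Prod>_{d|n} \<Psi>_{p^k d})^p\<close>. All factors are monic, hence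
  not divisible by \<open>p\<close>, so the congruences can be peeled off divisor by divisor:
  \<open>\<Psi>_{pm} \<equiv> \<Psi>_m^{p-1}\<close> and \<open>\<Psi>_{p^{k+1}m} \<equiv> \<Psi>_{p^k m}^p\<close>, which combine to the exponent
  \<open>\<phi>(p^k) = (p - 1) p^{k-1}\<close>.\<close>

section \<open>Fibonacci polynomials\<close>

lemma degree_lead_coeff_fibpoly:
  "degree (fibpoly (Suc n)) = n \<and> lead_coeff (fibpoly (Suc n)) = 1"
proof (induction n rule: fibpoly.induct)
  case (3 n)
  let ?P = "pCons 0 (fibpoly (Suc (Suc n)))"
  have "fibpoly (Suc (Suc n)) \<noteq> 0"
    using "3.IH"(1) by (metis leading_coeff_0_iff zero_neq_one)
  then have P: "degree ?P = Suc (Suc n)" "lead_coeff ?P = 1"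
    using "3.IH"(1) by (auto simp del: fibpoly.simps)
  have "degree (fibpoly (Suc n)) < degree ?P"
    using "3.IH"(2) P by (simp del: fibpoly.simps)
  moreover have "fibpoly (Suc (Suc (Suc n))) = ?P + fibpoly (Suc n)"
    by simp
  ultimately show ?case
    using P by (simp add: degree_add_eq_left coeff_eq_0 del: fibpoly.simps)
qed simp_all

lemma fibpoly_nonzero: "n > 0 \<Longrightarrow> fibpoly n \<noteq> 0"
  using degree_lead_coeff_fibpoly[of "n - 1"] by (cases n) auto

lemma lead_coeff_fibpoly: "n > 0 \<Longrightarrow> lead_coeff (fibpoly n) = 1"
  using degree_lead_coeff_fibpoly[of "n - 1"] by (cases n) auto

lemma fibpoly_add:
  "fibpoly (m + n + 1) = fibpoly (m + 1) * fibpoly (n + 1) + fibpoly m * fibpoly n"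
proof (induction m rule: fibpoly.induct)
  case (3 m)
  have "fibpoly (Suc (Suc m) + n + 1) =
          [:0, 1:] * fibpoly (Suc m + n + 1) + fibpoly (m + n + 1)"
    by simp
  then show ?case
    by (simp only: "3.IH") (simp add: algebra_simps)
qed (simp_all add: algebra_simps)

lemma fibpoly_dvd_mult: "fibpoly d dvd fibpoly (d * k)"
proof (induction k)
  case (Suc k)
  show ?case
  proof (cases d)
    case (Suc e)
    then have "fibpoly (d * Suc k) = fibpoly (d * k + 1) * fibpoly d + fibpoly (d * k) * fibpoly e"
      using fibpoly_add[of "d * k" e] by (simp add: algebra_simps)
    then show ?thesis
      using Suc.IH by simp
  qed simp
qed simp

lemma common_divisor_fibpoly_Suc_is_unit:
  "q dvd fibpoly n \<Longrightarrow> q dvd fibpoly (Suc n) \<Longrightarrow> is_unit q"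
proof (induction n)
  case (Suc n)
  have "q dvd fibpoly (Suc (Suc n)) - [:0, 1:] * fibpoly (Suc n)"
    using Suc.prems by (intro dvd_diff dvd_mult)
  then show ?case
    using Suc by simp
qed simp

lemma prime_elem_dvd_fibpoly_add_cancel:
  assumes q: "prime_elem q" and "q dvd fibpoly a" and "q dvd fibpoly (a + b)"
  shows "q dvd fibpoly b"
proof (cases b)
  case (Suc c)
  have "fibpoly (a + 1) * fibpoly b = fibpoly (a + b) - fibpoly a * fibpoly c"
    using fibpoly_add[of a c] Suc by simp
  then have "q dvd fibpoly (a + 1) * fibpoly b"
    using assms by simp
  moreover have "\<not> q dvd fibpoly (a + 1)"
    using common_divisor_fibpoly_Suc_is_unit[of q a] assms prime_elem_not_unit by auto
  ultimately show ?thesis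
    using q prime_elem_dvd_mult_iff by blast
qed simp

lemma prime_elem_dvd_fibpoly_mod:
  assumes q: "prime_elem q" and d: "q dvd fibpoly d" and n: "q dvd fibpoly n"
  shows "q dvd fibpoly (n mod d)"
proof -
  have "q dvd fibpoly r" if "q dvd fibpoly (d * j + r)" for j r
    using that
  proof (induction j)
    case (Suc j)
    have "q dvd fibpoly (d + (d * j + r))"
      using Suc.prems by (simp add: add.assoc)
    then show ?case
      using Suc.IH prime_elem_dvd_fibpoly_add_cancel[OF q d] by blast
  qed simp
  moreover have "q dvd fibpoly (d * (n div d) + n mod d)"
    using n by simp
  ultimately show ?thesis
    by blast
qed

lemma fibpoly_rank_dvd:
  assumes "prime_elem q" "0 < d" "q dvd fibpoly d" "q dvd fibpoly n"
    and "\<forall>k. 0 < k \<and> k < d \<longrightarrow> \<not> q dvd fibpoly k"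
  shows "d dvd n"
proof -
  have "q dvd fibpoly (n mod d)" "n mod d < d"
    using prime_elem_dvd_fibpoly_mod[OF assms(1,3,4)] \<open>0 < d\<close> by simp_all
  then have "\<not> 0 < n mod d"
    using assms(5) by auto
  then show ?thesis
    by (simp add: mod_greater_zero_iff_not_dvd)
qed

lemma fibpoly_cassini:
  "fibpoly (n + 1) ^ 2 - [:0, 1:] * fibpoly (n + 1) * fibpoly n - fibpoly n ^ 2 = (-1) ^ n"
proof (induction n)
  case (Suc n)
  have "fibpoly (Suc n + 1) = [:0, 1:] * fibpoly (n + 1) + fibpoly n"
    by simp
  then show ?case
    using Suc.IH by (simp add: algebra_simps power2_eq_square)
qed simp

lemma pderiv_fibpoly:
  "([:0, 1:] ^ 2 + 4) * pderiv (fibpoly n) =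
     2 * of_nat n * fibpoly (n + 1) - (of_nat n + 1) * [:0, 1:] * fibpoly n"
proof (induction n rule: fibpoly.induct)
  case (3 n)
  define x :: "int poly" where "x = [:0, 1:]"
  have rec: "fibpoly (Suc (Suc m)) = x * fibpoly (Suc m) + fibpoly m" for m
    by (simp add: x_def)
  have "pderiv x = 1"
    by (simp add: x_def pderiv_pCons)
  then have "(x ^ 2 + 4) * pderiv (fibpoly (Suc (Suc n))) =
      (x ^ 2 + 4) * fibpoly (Suc n) + x * ((x ^ 2 + 4) * pderiv (fibpoly (Suc n)))
      + (x ^ 2 + 4) * pderiv (fibpoly n)"
    by (simp only: rec pderiv_add pderiv_mult) (simp add: algebra_simps)
  also have "\<dots> = 2 * of_nat (Suc (Suc n)) * fibpoly (Suc (Suc n) + 1)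
      - (of_nat (Suc (Suc n)) + 1) * x * fibpoly (Suc (Suc n))"
    using "3.IH" by (simp only: x_def [symmetric])
      (simp del: fibpoly.simps add: rec algebra_simps power2_eq_square)
  finally show ?case
    by (simp only: x_def)
qed simp_all

lemma constant_dvd_monic_is_unit:
  fixes q f :: "'a :: {comm_semiring_1, semiring_no_zero_divisors} poly"
  assumes "q dvd f" "lead_coeff f = 1" "degree q = 0"
  shows "q dvd 1"
proof -
  obtain a where a: "q = [:a:]"
    using \<open>degree q = 0\<close> degree_eq_zeroE by blast
  then have "a dvd lead_coeff f"
    using \<open>q dvd f\<close> const_poly_dvd_iff by blast
  then show ?thesis
    using a assms(2) by (simp add: is_unit_const_poly_iff)
qed

text \<open>A square factor \<open>q\<^sup>2\<close> of \<open>F = F_n\<close> also makes \<open>q\<close> divide \<open>F'\<close>. By the derivative identity and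
  Cassini's identity, \<open>q\<close> then divides the nonzero constant \<open>4 n\<^sup>2 (-1)\<^sup>n\<close>, so \<open>q\<close> is a constant
  dividing the monic \<open>F\<close>.\<close>

lemma squarefree_fibpoly:
  assumes "n > 0"
  shows "squarefree (fibpoly n)"
proof (rule squarefreeI)
  fix q assume sq: "q ^ 2 dvd fibpoly n"
  define x :: "int poly" where "x = [:0, 1:]"
  define N :: "int poly" where "N = of_nat n"
  define F where "F = fibpoly n"
  define M where "M = 2 * fibpoly (n + 1) - x * F"
  obtain h where h: "F = q * q * h"
    using sq unfolding F_def power2_eq_square by (auto elim: dvdE)
  have "pderiv F = q * (2 * pderiv q * h + q * pderiv h)"
    unfolding h by (simp add: pderiv_mult algebra_simps)
  then have "q dvd (x ^ 2 + 4) * pderiv F + x * F"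
    using h by simp
  moreover have "N * M = (x ^ 2 + 4) * pderiv F + x * F"
    using pderiv_fibpoly[of n, folded x_def] unfolding N_def M_def F_def
    by (simp add: algebra_simps)
  ultimately have "q dvd (N * M) ^ 2"
    by (simp add: power2_eq_square)
  moreover have "M ^ 2 - (x ^ 2 + 4) * F ^ 2 = 4 * (-1) ^ n"
    using fibpoly_cassini[of n, folded x_def] unfolding M_def F_def
    by (simp add: algebra_simps power2_eq_square)
  then have "N ^ 2 * (4 * (-1) ^ n) = (N * M) ^ 2 - N ^ 2 * ((x ^ 2 + 4) * F ^ 2)"
    by (simp add: algebra_simps power_mult_distrib)
  moreover have "q dvd N ^ 2 * ((x ^ 2 + 4) * F ^ 2)"
    using h by (simp add: power2_eq_square)
  ultimately have "q dvd N ^ 2 * (4 * (-1) ^ n)"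
    by (metis dvd_diff)
  moreover have "N ^ 2 * (4 * (-1) ^ n) = [:int n ^ 2 * 4 * (-1) ^ n:]"
  proof -
    have "(-1 :: int poly) = [:-1:]"
      by (simp add: one_pCons)
    then show ?thesis
      unfolding N_def by (simp add: of_nat_poly poly_const_pow numeral_poly)
  qed
  ultimately have "degree q = 0"
    using dvd_imp_degree_le[of q "[:int n ^ 2 * 4 * (-1) ^ n:]"] \<open>n > 0\<close> by simp
  moreover have "q dvd fibpoly n"
    using sq by (metis dvd_mult_left power2_eq_square)
  ultimately show "is_unit q"
    using constant_dvd_monic_is_unit lead_coeff_fibpoly[OF \<open>n > 0\<close>] by blast
qed

section \<open>Factorization into fibotomic polynomials\<close>

text \<open>The library provides this instance only for polynomials over a field.\<close>

instance poly :: ("{factorial_ring_gcd, semiring_gcd_mult_normalize}")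
  factorial_semiring_multiplicative ..

lemma prod_prime_factors_squarefree:
  fixes x :: "'a :: factorial_semiring_multiplicative"
  assumes "x \<noteq> 0" "squarefree x"
  shows "\<Prod>(prime_factors x) = normalize x"
proof -
  have "\<Prod>(prime_factors x) = (\<Prod>p \<in> prime_factors x. p ^ multiplicity p x)"
    using assms by (intro prod.cong) (simp_all add: squarefree_factorial_semiring')
  then show ?thesis
    using prod_prime_factors[OF \<open>x \<noteq> 0\<close>] by simp
qed

lemma normalize_monic:
  fixes p :: "'a :: {semidom_divide_unit_factor, idom_divide} poly"
  shows "lead_coeff p = 1 \<Longrightarrow> normalize p = p"
  by (simp add: normalize_poly_def is_unit_unit_factor flip: one_pCons)

lemma prime_dvd_monic_iff:
  fixes q f :: "int poly"
  assumes f: "lead_coeff f = 1" and "q dvd f"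
  shows "prime q \<longleftrightarrow> irreducible q \<and> lead_coeff q = 1"
proof
  assume q: "prime q"
  obtain h where "f = q * h"
    using \<open>q dvd f\<close> by blast
  then have "is_unit (lead_coeff q)"
    using f by (metis dvdI lead_coeff_mult)
  moreover have "normalize q = q" and "q \<noteq> 0"
    using q by simp_all
  then have "unit_factor (lead_coeff q) = 1"
    using normalize_idem_imp_unit_factor_eq[of q] by (simp add: unit_factor_poly_def one_pCons)
  ultimately show "irreducible q \<and> lead_coeff q = 1"
    using q by (auto simp: prime_elem_iff_irreducible prime_def) (metis mult_sgn_abs mult_1)
next
  assume q: "irreducible q \<and> lead_coeff q = 1"
  then have "normalize q = q"
    by (simp add: normalize_monic)
  then show "prime q"
    using q by (simp add: prime_def prime_elem_iff_irreducible)
qed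

definition primitive_prime_factors :: "nat \<Rightarrow> int poly set" where
  "primitive_prime_factors n =
     {q \<in> prime_factors (fibpoly n). \<forall>k. 0 < k \<and> k < n \<longrightarrow> \<not> q dvd fibpoly k}"

lemma fibotomic_eq_prod_primitive_prime_factors:
  assumes "n > 0"
  shows "fibotomic n = \<Prod>(primitive_prime_factors n)"
proof (cases "n = 1")
  case False
  have "{q. irreducible q \<and> lead_coeff q = 1 \<and> q dvd fibpoly n \<and>
           (\<forall>k. 1 \<le> k \<and> k < n \<longrightarrow> \<not> q dvd fibpoly k)} = primitive_prime_factors n"
    using prime_dvd_monic_iff[OF lead_coeff_fibpoly[OF assms]] fibpoly_nonzero[OF assms]
    by (auto simp: primitive_prime_factors_def in_prime_factors_iff Suc_le_eq)
  then show ?thesis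
    using False assms by (simp add: fibotomic_def)
qed (simp add: fibotomic_def primitive_prime_factors_def)

lemma primitive_prime_factors_disjoint:
  assumes "0 < d" "0 < e" "d \<noteq> e"
  shows "primitive_prime_factors d \<inter> primitive_prime_factors e = {}"
  using assms
  by (cases "d < e") (auto simp: primitive_prime_factors_def in_prime_factors_iff)

lemma prime_factors_fibpoly:
  assumes "n > 0"
  shows "prime_factors (fibpoly n) = (\<Union>d \<in> {d. d dvd n}. primitive_prime_factors d)"
proof (intro equalityI subsetI)
  fix q assume q: "q \<in> prime_factors (fibpoly n)"
  then have "prime q" "q dvd fibpoly n"
    by (auto simp: in_prime_factors_iff)
  define r where "r = (LEAST k. 0 < k \<and> q dvd fibpoly k)"
  have r: "0 < r" "q dvd fibpoly r"
    using LeastI[of "\<lambda>k. 0 < k \<and> q dvd fibpoly k" n] assms \<open>q dvd fibpoly n\<close>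
    by (simp_all add: r_def)
  have r_min: "\<forall>k. 0 < k \<and> k < r \<longrightarrow> \<not> q dvd fibpoly k"
    unfolding r_def using not_less_Least by blast
  have "r dvd n"
    using fibpoly_rank_dvd[OF _ r \<open>q dvd fibpoly n\<close> r_min] \<open>prime q\<close> by simp
  moreover have "q \<in> primitive_prime_factors r"
    using r r_min \<open>prime q\<close> fibpoly_nonzero[OF \<open>0 < r\<close>]
    by (auto simp: primitive_prime_factors_def in_prime_factors_iff)
  ultimately show "q \<in> (\<Union>d \<in> {d. d dvd n}. primitive_prime_factors d)"
    by blast
next
  fix q assume "q \<in> (\<Union>d \<in> {d. d dvd n}. primitive_prime_factors d)"
  then obtain d where "d dvd n" "prime q" "q dvd fibpoly d"
    by (auto simp: primitive_prime_factors_def in_prime_factors_iff)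
  moreover have "fibpoly d dvd fibpoly n"
    using \<open>d dvd n\<close> fibpoly_dvd_mult by (auto elim: dvdE)
  ultimately show "q \<in> prime_factors (fibpoly n)"
    using fibpoly_nonzero[OF assms] by (auto simp: in_prime_factors_iff intro: dvd_trans)
qed

lemma fibpoly_eq_prod_fibotomic:
  assumes "n > 0"
  shows "fibpoly n = (\<Prod>d | d dvd n. fibotomic d)"
proof -
  have divisors_pos: "d \<in> {d. d dvd n} \<Longrightarrow> 0 < d" for d
    using assms by (auto intro: dvd_pos_nat)
  have "fibpoly n = \<Prod>(prime_factors (fibpoly n))"
    using prod_prime_factors_squarefree[OF fibpoly_nonzero[OF assms] squarefree_fibpoly[OF assms]]
    by (simp add: normalize_monic lead_coeff_fibpoly[OF assms])
  also have "\<dots> = \<Prod>(\<Union>d \<in> {d. d dvd n}. primitive_prime_factors d)"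
    by (simp only: prime_factors_fibpoly[OF assms])
  also have "\<dots> = (\<Prod>d | d dvd n. \<Prod>(primitive_prime_factors d))"
    using assms divisors_pos primitive_prime_factors_disjoint
    by (intro prod.UNION_disjoint) (simp_all add: primitive_prime_factors_def)
  also have "\<dots> = (\<Prod>d | d dvd n. fibotomic d)"
    using divisors_pos by (simp add: fibotomic_eq_prod_primitive_prime_factors)
  finally show ?thesis .
qed

section \<open>The multiplication formula\<close>

text \<open>The ring \<open>\<int>[x][\<alpha>]\<close> with \<open>\<alpha>\<^sup>2 = x\<alpha> + 1\<close>; \<open>FibExt a b\<close> stands for \<open>a\<alpha> + b\<close>.\<close>

datatype fib_ext = FibExt (alpha_part: "int poly") (const_part: "int poly")

instantiation fib_ext :: comm_ring_1
begin

definition "0 = FibExt 0 0"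
definition "1 = FibExt 0 1"
definition "z + w = FibExt (alpha_part z + alpha_part w) (const_part z + const_part w)"
definition "z - w = FibExt (alpha_part z - alpha_part w) (const_part z - const_part w)"
definition "- z = FibExt (- alpha_part z) (- const_part z)"
definition "z * w = FibExt
    (alpha_part z * alpha_part w * [:0, 1:]
      + alpha_part z * const_part w + const_part z * alpha_part w)
    (alpha_part z * alpha_part w + const_part z * const_part w)"

instance
  by standard
    (simp_all add: zero_fib_ext_def one_fib_ext_def plus_fib_ext_def minus_fib_ext_def
      uminus_fib_ext_def times_fib_ext_def fib_ext.expand algebra_simps)

end

definition fe_alpha :: fib_ext where
  "fe_alpha = FibExt 1 0"

definition fe_const :: "int poly \<Rightarrow> fib_ext" where
  "fe_const c = FibExt 0 c"

lemma alpha_part_add: "alpha_part (z + w) = alpha_part z + alpha_part w"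
  by (simp add: plus_fib_ext_def)

lemma alpha_part_sum: "alpha_part (sum f A) = (\<Sum>i\<in>A. alpha_part (f i))"
  by (induction A rule: infinite_finite_induct) (simp_all add: zero_fib_ext_def alpha_part_add)

lemma alpha_part_fe_const_mult: "alpha_part (fe_const c * z) = c * alpha_part z"
  by (simp add: fe_const_def times_fib_ext_def)

lemma fe_const_mult: "fe_const (a * b) = fe_const a * fe_const b"
  by (simp add: fe_const_def times_fib_ext_def)

lemma fe_const_power: "fe_const (a ^ n) = fe_const a ^ n"
  by (induction n) (simp_all add: fe_const_mult, simp add: fe_const_def one_fib_ext_def)

lemma of_nat_fib_ext: "of_nat n = fe_const (of_nat n)"
  by (induction n)
    (simp_all add: fe_const_def zero_fib_ext_def one_fib_ext_def plus_fib_ext_def)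

lemma fib_ext_decompose: "z = fe_const (alpha_part z) * fe_alpha + fe_const (const_part z)"
  by (simp add: fe_const_def fe_alpha_def times_fib_ext_def plus_fib_ext_def)

text \<open>The constant part is \<open>F_{n-1}\<close>, written without index subtraction so that it is
  also right (namely \<open>1\<close>) for \<open>n = 0\<close>.\<close>

lemma fe_alpha_power: "fe_alpha ^ n = FibExt (fibpoly n) (fibpoly (n + 1) - [:0, 1:] * fibpoly n)"
  by (induction n) (simp_all add: one_fib_ext_def fe_alpha_def times_fib_ext_def algebra_simps)

lemma fibpoly_mult_binomial:
  "fibpoly (j * n) = (\<Sum>k\<le>n. of_nat (n choose k) * fibpoly j ^ k
      * (fibpoly (j + 1) - [:0, 1:] * fibpoly j) ^ (n - k) * fibpoly k)"
proof -
  let ?a = "fe_const (fibpoly j)" and ?b = "fe_const (fibpoly (j + 1) - [:0, 1:] * fibpoly j)"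
  have "fibpoly (j * n) = alpha_part (fe_alpha ^ (j * n))"
    by (simp add: fe_alpha_power)
  also have "fe_alpha ^ (j * n) = (?a * fe_alpha + ?b) ^ n"
    using fib_ext_decompose[of "fe_alpha ^ j"] by (simp add: power_mult fe_alpha_power)
  also have "\<dots> = (\<Sum>k\<le>n. of_nat (n choose k) * (?a * fe_alpha) ^ k * ?b ^ (n - k))"
    by (rule binomial_ring)
  also have "\<dots> = (\<Sum>k\<le>n. fe_const (of_nat (n choose k) * fibpoly j ^ k
      * (fibpoly (j + 1) - [:0, 1:] * fibpoly j) ^ (n - k)) * fe_alpha ^ k)"
    by (simp add: of_nat_fib_ext fe_const_mult fe_const_power power_mult_distrib algebra_simps)
  finally show ?thesis
    by (simp add: alpha_part_sum alpha_part_fe_const_mult fe_alpha_power)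
qed

text \<open>\<open>cong\<close> requires a Euclidean ring, which \<open>int poly\<close> is not.\<close>

definition cong_dvd :: "'a :: comm_ring_1 \<Rightarrow> 'a \<Rightarrow> 'a \<Rightarrow> bool" where
  "cong_dvd c a b \<longleftrightarrow> c dvd a - b"

lemma cong_dvd_refl [simp]: "cong_dvd c a a"
  by (simp add: cong_dvd_def)

lemma cong_dvd_sym: "cong_dvd c a b \<Longrightarrow> cong_dvd c b a"
  unfolding cong_dvd_def by (metis dvd_minus_iff minus_diff_eq)

lemma cong_dvd_trans [trans]: "cong_dvd c a b \<Longrightarrow> cong_dvd c b d \<Longrightarrow> cong_dvd c a d"
proof -
  assume "cong_dvd c a b" "cong_dvd c b d"
  then have "c dvd (a - b) + (b - d)"
    unfolding cong_dvd_def by (rule dvd_add)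
  then show ?thesis
    by (simp add: cong_dvd_def)
qed

lemma cong_dvd_mult: "cong_dvd c a b \<Longrightarrow> cong_dvd c a' b' \<Longrightarrow> cong_dvd c (a * a') (b * b')"
proof -
  assume "cong_dvd c a b" "cong_dvd c a' b'"
  then have "c dvd a * (a' - b') + (a - b) * b'"
    unfolding cong_dvd_def by (intro dvd_add dvd_mult dvd_mult2)
  then show ?thesis
    unfolding cong_dvd_def by (simp add: algebra_simps)
qed

lemma cong_dvd_power: "cong_dvd c a b \<Longrightarrow> cong_dvd c (a ^ n) (b ^ n)"
  by (induction n) (simp_all add: cong_dvd_mult)

lemma cong_dvd_prod:
  "(\<And>i. i \<in> A \<Longrightarrow> cong_dvd c (f i) (g i)) \<Longrightarrow> cong_dvd c (prod f A) (prod g A)"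
  by (induction A rule: infinite_finite_induct) (simp_all add: cong_dvd_mult)

lemma cong_dvd_mult_cancel_left:
  fixes c :: "'a :: idom"
  assumes "prime_elem c" "\<not> c dvd a" "cong_dvd c (a * b) (a * b')"
  shows "cong_dvd c b b'"
proof -
  have "c dvd a * (b - b')"
    using assms(3) by (simp add: cong_dvd_def algebra_simps)
  then show ?thesis
    using assms(1,2) prime_elem_dvd_mult_iff unfolding cong_dvd_def by blast
qed

lemma cong_dvd_const_poly_coeff:
  fixes c :: int
  assumes "cong_dvd [:c:] f g"
  shows "[coeff f i = coeff g i] (mod c)"
  using assms unfolding cong_dvd_def cong_iff_dvd_diff
  by (simp add: const_poly_dvd_iff flip: coeff_diff)

section \<open>Reduction modulo \<open>p\<close>\<close>

lemma prime_not_dvd_monic: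
  assumes "prime p" "lead_coeff f = 1"
  shows "\<not> [:int p:] dvd f"
proof
  assume "[:int p:] dvd f"
  then have "int p dvd lead_coeff f"
    by (simp add: const_poly_dvd_iff)
  then show False
    using assms by (simp add: prime_gt_1_nat)
qed

lemma prime_elem_const_poly_prime: "prime p \<Longrightarrow> prime_elem [:int p:]"
  by (simp add: prime_elem_const_poly_iff)

lemma cong_dvd_prime_mult_cancel_monic:
  assumes "prime p" "lead_coeff a = 1" "cong_dvd [:int p:] (a * b) (a * b')"
  shows "cong_dvd [:int p:] b b'"
  using assms prime_elem_const_poly_prime cong_dvd_mult_cancel_left prime_not_dvd_monic by blast

lemma fibpoly_prime_mult_cong:
  assumes p: "prime p"
  shows "cong_dvd [:int p:] (fibpoly (p * j)) (fibpoly j ^ p * fibpoly p)"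
proof -
  let ?t = "\<lambda>k. of_nat (p choose k) * fibpoly j ^ k
      * (fibpoly (j + 1) - [:0, 1:] * fibpoly j) ^ (p - k) * fibpoly k"
  have "0 < p"
    using p prime_gt_0_nat by blast
  then have "{..p} = insert 0 (insert p {1..<p})"
    by auto
  then have "fibpoly (p * j) = fibpoly j ^ p * fibpoly p + (\<Sum>k\<in>{1..<p}. ?t k)"
    using fibpoly_mult_binomial[of j p] \<open>0 < p\<close> by (simp add: mult.commute)
  moreover have "[:int p:] dvd (\<Sum>k\<in>{1..<p}. ?t k)"
  proof (rule dvd_sum)
    fix k assume "k \<in> {1..<p}"
    then have "p dvd p choose k"
      using dvd_choose_prime[of k p] p by auto
    then have "[:int p:] dvd of_nat (p choose k)"
      by (simp add: of_nat_poly const_poly_dvd_iff coeff_pCons split: nat.splits)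
    then show "[:int p:] dvd ?t k"
      by (simp add: mult.assoc)
  qed
  ultimately show ?thesis
    unfolding cong_dvd_def by (simp del: fibpoly.simps)
qed

lemma prime_elem_not_dvd_prod:
  assumes "prime_elem c" "\<And>i. i \<in> A \<Longrightarrow> \<not> c dvd f i"
  shows "\<not> c dvd prod f A"
  using assms
  by (induction A rule: infinite_finite_induct)
    (auto simp: prime_elem_dvd_mult_iff prime_elem_not_unit)

lemma cong_dvd_divisor_prod_inversion:
  fixes f g :: "nat \<Rightarrow> 'a :: idom"
  assumes c: "prime_elem c" and g: "\<And>d. \<not> c dvd g d"
    and P: "\<And>d n. d dvd n \<Longrightarrow> P n \<Longrightarrow> P d"
    and prod: "\<And>n. 0 < n \<Longrightarrow> P n \<Longrightarrow> cong_dvd c (\<Prod>d | d dvd n. f d) (\<Prod>d | d dvd n. g d)"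
  shows "0 < n \<Longrightarrow> P n \<Longrightarrow> cong_dvd c (f n) (g n)"
proof (induction n rule: less_induct)
  case (less n)
  let ?D = "{d. d dvd n} - {n}"
  have prod_split: "(\<Prod>d | d dvd n. h d) = h n * (\<Prod>d \<in> ?D. h d)" for h :: "nat \<Rightarrow> 'a"
    using less.prems by (subst prod.remove[of _ n]) auto
  have "cong_dvd c (f d) (g d)" if "d \<in> ?D" for d
  proof (rule less.IH)
    have "d dvd n" "d \<noteq> n"
      using that by simp_all
    then show "d < n" "0 < d"
      using less.prems(1) dvd_imp_le[of d n] dvd_pos_nat[of n d] by simp_all
    show "P d"
      using P[OF \<open>d dvd n\<close> less.prems(2)] .
  qed
  then have "cong_dvd c (\<Prod>d \<in> ?D. f d) (\<Prod>d \<in> ?D. g d)"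
    by (rule cong_dvd_prod)
  then have "cong_dvd c (f n * (\<Prod>d \<in> ?D. g d)) (f n * (\<Prod>d \<in> ?D. f d))"
    by (intro cong_dvd_mult cong_dvd_refl) (rule cong_dvd_sym)
  also have "cong_dvd c (f n * (\<Prod>d \<in> ?D. f d)) (g n * (\<Prod>d \<in> ?D. g d))"
    using prod[OF less.prems] by (simp only: prod_split)
  finally have "cong_dvd c ((\<Prod>d \<in> ?D. g d) * f n) ((\<Prod>d \<in> ?D. g d) * g n)"
    by (simp only: mult.commute)
  moreover have "\<not> c dvd (\<Prod>d \<in> ?D. g d)"
    by (rule prime_elem_not_dvd_prod[OF c]) (rule g)
  ultimately show ?case
    using cong_dvd_mult_cancel_left[OF c] by blast
qed

lemma divisors_prime_power_mult:
  fixes p n k :: nat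
  assumes p: "prime p" and "coprime p n"
  shows "{e. e dvd p ^ (k + 1) * n} = {e. e dvd p ^ k * n} \<union> (\<lambda>d. p ^ (k + 1) * d) ` {d. d dvd n}"
    and "{e. e dvd p ^ k * n} \<inter> (\<lambda>d. p ^ (k + 1) * d) ` {d. d dvd n} = {}"
proof -
  show "{e. e dvd p ^ (k + 1) * n} = {e. e dvd p ^ k * n} \<union> (\<lambda>d. p ^ (k + 1) * d) ` {d. d dvd n}"
  proof (intro equalityI subsetI)
    fix e assume "e \<in> {e. e dvd p ^ (k + 1) * n}"
    then have "e dvd p ^ (k + 1) * n"
      by simp
    then obtain b c where e: "e = b * c" "b dvd p ^ (k + 1)" "c dvd n"
      using division_decomp by blast
    then obtain i where i: "i \<le> k + 1" "b = p ^ i"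
      using divides_primepow_nat[OF p] by blast
    show "e \<in> {e. e dvd p ^ k * n} \<union> (\<lambda>d. p ^ (k + 1) * d) ` {d. d dvd n}"
    proof (cases "i = k + 1")
      case False
      then have "p ^ i dvd p ^ k"
        using i(1) by (simp add: le_imp_power_dvd)
      then show ?thesis
        using e i by (simp add: mult_dvd_mono)
    qed (use e i in auto)
  next
    fix e assume "e \<in> {e. e dvd p ^ k * n} \<union> (\<lambda>d. p ^ (k + 1) * d) ` {d. d dvd n}"
    then show "e \<in> {e. e dvd p ^ (k + 1) * n}"
    proof
      assume "e \<in> {e. e dvd p ^ k * n}"
      then have "e dvd p ^ k * n"
        by simp
      also have "p ^ k * n dvd p ^ (k + 1) * n"
        by (simp add: mult_dvd_mono)
      finally show ?thesis
        by simp
    qed (auto intro: mult_dvd_mono)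
  qed
  show "{e. e dvd p ^ k * n} \<inter> (\<lambda>d. p ^ (k + 1) * d) ` {d. d dvd n} = {}"
  proof (rule ccontr)
    assume "\<not> ?thesis"
    then obtain d where "p * d dvd n"
      using prime_gt_0_nat[OF p] by auto
    then have "p dvd n"
      by (rule dvd_mult_left)
    then show False
      using coprime_common_divisor[OF assms(2) dvd_refl] p not_prime_unit by blast
  qed
qed

lemma fibpoly_prime_power_mult:
  fixes p n k :: nat
  assumes p: "prime p" and "coprime p n" "0 < n"
  shows "fibpoly (p ^ (k + 1) * n) =
    fibpoly (p ^ k * n) * (\<Prod>d | d dvd n. fibotomic (p ^ (k + 1) * d))"
proof -
  have "0 < p"
    using p prime_gt_0_nat by blast
  have "fibpoly (p ^ (k + 1) * n) = (\<Prod>e | e dvd p ^ (k + 1) * n. fibotomic e)"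
    using \<open>0 < p\<close> \<open>0 < n\<close> by (simp add: fibpoly_eq_prod_fibotomic)
  also have "\<dots> = (\<Prod>e | e dvd p ^ k * n. fibotomic e)
      * (\<Prod>e \<in> (\<lambda>d. p ^ (k + 1) * d) ` {d. d dvd n}. fibotomic e)"
    unfolding divisors_prime_power_mult(1)[OF assms(1,2)]
    using divisors_prime_power_mult(2)[OF assms(1,2)] \<open>0 < p\<close> \<open>0 < n\<close>
    by (intro prod.union_disjoint) auto
  also have "(\<Prod>e | e dvd p ^ k * n. fibotomic e) = fibpoly (p ^ k * n)"
    using \<open>0 < p\<close> \<open>0 < n\<close> by (simp add: fibpoly_eq_prod_fibotomic)
  also have "(\<Prod>e \<in> (\<lambda>d. p ^ (k + 1) * d) ` {d. d dvd n}. fibotomic e)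
      = (\<Prod>d | d dvd n. fibotomic (p ^ (k + 1) * d))"
    using \<open>0 < p\<close> by (subst prod.reindex) (auto simp: inj_on_def)
  finally show ?thesis .
qed

lemma lead_coeff_fibotomic: "lead_coeff (fibotomic n) = 1"
  by (simp add: fibotomic_def lead_coeff_prod)

lemma prod_fibotomic_prime_mult_cong:
  fixes p n :: nat
  assumes p: "prime p" and "coprime p n" "0 < n"
  shows "cong_dvd [:int p:] (\<Prod>d | d dvd n. fibotomic (p * d)) (fibpoly p * fibpoly n ^ (p - 1))"
proof -
  have power: "fibpoly n * (fibpoly p * fibpoly n ^ (p - 1)) = fibpoly n ^ p * fibpoly p"
    using prime_gt_0_nat[OF p] by (cases p) (simp_all add: algebra_simps)
  have split: "fibpoly (p * n) = fibpoly n * (\<Prod>d | d dvd n. fibotomic (p * d))"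
    using fibpoly_prime_power_mult[OF assms, of 0] by simp
  have "cong_dvd [:int p:] (fibpoly n * (\<Prod>d | d dvd n. fibotomic (p * d)))
      (fibpoly n * (fibpoly p * fibpoly n ^ (p - 1)))"
    using fibpoly_prime_mult_cong[OF p, of n] by (simp only: split power)
  then show ?thesis
    using cong_dvd_prime_mult_cancel_monic[OF p lead_coeff_fibpoly[OF \<open>0 < n\<close>]] by blast
qed

lemma prod_fibotomic_prime_power_mult_cong:
  fixes p n k :: nat
  assumes p: "prime p" and "coprime p n" "0 < n"
  shows "cong_dvd [:int p:] (\<Prod>d | d dvd n. fibotomic (p ^ (k + 2) * d))
      ((\<Prod>d | d dvd n. fibotomic (p ^ (k + 1) * d)) ^ p)"
proof -
  define B where "B = fibpoly (p ^ k * n)"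
  define A1 where "A1 = (\<Prod>d | d dvd n. fibotomic (p ^ (k + 1) * d))"
  define A2 where "A2 = (\<Prod>d | d dvd n. fibotomic (p ^ (k + 2) * d))"
  have split1: "fibpoly (p ^ (k + 1) * n) = B * A1"
    unfolding B_def A1_def by (rule fibpoly_prime_power_mult[OF assms])
  have split2: "fibpoly (p ^ (k + 2) * n) = B * A1 * A2"
    using fibpoly_prime_power_mult[OF assms, of "k + 1"] split1
    unfolding A2_def by (simp add: numeral_eq_Suc)
  have "p * (p ^ (k + 1) * n) = p ^ (k + 2) * n" "p * (p ^ k * n) = p ^ (k + 1) * n"
    by (simp_all add: ac_simps)
  then have c2: "cong_dvd [:int p:] (fibpoly (p ^ (k + 2) * n))
        (fibpoly (p ^ (k + 1) * n) ^ p * fibpoly p)"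
    and c1: "cong_dvd [:int p:] (fibpoly (p ^ (k + 1) * n)) (B ^ p * fibpoly p)"
    using fibpoly_prime_mult_cong[OF p, of "p ^ (k + 1) * n"]
      fibpoly_prime_mult_cong[OF p, of "p ^ k * n"]
    by (simp_all only: B_def)
  have "(B * A1) ^ p * fibpoly p = B ^ p * fibpoly p * A1 ^ p"
    by (simp add: power_mult_distrib mult_ac)
  then have "cong_dvd [:int p:] (B * A1 * A2) (B ^ p * fibpoly p * A1 ^ p)"
    using c2 by (simp only: split1 split2)
  moreover have "cong_dvd [:int p:] (B * A1 * A2) (B ^ p * fibpoly p * A2)"
    using cong_dvd_mult[OF c1 cong_dvd_refl] by (simp only: split1)
  ultimately have "cong_dvd [:int p:] (B ^ p * fibpoly p * A2) (B ^ p * fibpoly p * A1 ^ p)"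
    using cong_dvd_sym cong_dvd_trans by blast
  moreover have "lead_coeff (B ^ p * fibpoly p) = 1"
    using prime_gt_0_nat[OF p] \<open>0 < n\<close>
    by (simp add: B_def lead_coeff_mult lead_coeff_power lead_coeff_fibpoly)
  ultimately show ?thesis
    unfolding A1_def A2_def using cong_dvd_prime_mult_cancel_monic[OF p] by blast
qed

lemma fibotomic_prime_mult_cong:
  fixes p m :: nat
  assumes p: "prime p" and "coprime p m" and "m \<ge> 2"
  shows "cong_dvd [:int p:] (fibotomic (p * m)) (fibotomic m ^ (p - 1))"
proof -
  text \<open>The factor \<open>F_p\<close> of \<open>\<Prod>_{d|n} g d = F_p F_n^{p-1}\<close> sits at \<open>d = 1\<close>; this is
    why \<open>m = 1\<close> has to be excluded.\<close>
  define g where "g d = (if d = 1 then fibpoly p else 1) * fibotomic d ^ (p - 1)" for d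
  have g_not_dvd: "\<not> [:int p:] dvd g d" for d
    using p lead_coeff_fibpoly[OF prime_gt_0_nat[OF p]]
    by (intro prime_not_dvd_monic)
      (simp_all add: g_def lead_coeff_mult lead_coeff_power lead_coeff_fibotomic)
  have "(\<Prod>d | d dvd n. g d) = fibpoly p * (\<Prod>d | d dvd n. fibotomic d) ^ (p - 1)"
    if "0 < n" for n
    using that by (simp add: g_def prod.distrib prod_power_distrib prod.delta)
  then have "(\<Prod>d | d dvd n. g d) = fibpoly p * fibpoly n ^ (p - 1)" if "0 < n" for n
    using that by (simp add: fibpoly_eq_prod_fibotomic)
  then have prod_cong:
    "cong_dvd [:int p:] (\<Prod>d | d dvd n. fibotomic (p * d)) (\<Prod>d | d dvd n. g d)"
    if "0 < n" "coprime p n" for n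
    using prod_fibotomic_prime_mult_cong[OF p that(2,1)] that(1) by simp
  have "cong_dvd [:int p:] (fibotomic (p * m)) (g m)"
    using cong_dvd_divisor_prod_inversion[where P = "coprime p",
        OF prime_elem_const_poly_prime[OF p] g_not_dvd coprime_divisors[OF dvd_refl] prod_cong]
      assms(2,3) by simp
  then show ?thesis
    using \<open>m \<ge> 2\<close> by (simp add: g_def)
qed

lemma fibotomic_prime_power_mult_cong:
  fixes p m k :: nat
  assumes p: "prime p" and "coprime p m" and "0 < m"
  shows "cong_dvd [:int p:] (fibotomic (p ^ (k + 2) * m)) (fibotomic (p ^ (k + 1) * m) ^ p)"
proof -
  have not_dvd: "\<not> [:int p:] dvd fibotomic (p ^ (k + 1) * d) ^ p" for d
    using p by (intro prime_not_dvd_monic) (simp_all add: lead_coeff_power lead_coeff_fibotomic)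
  have prod_cong: "cong_dvd [:int p:] (\<Prod>d | d dvd n. fibotomic (p ^ (k + 2) * d))
      (\<Prod>d | d dvd n. fibotomic (p ^ (k + 1) * d) ^ p)"
    if "0 < n" "coprime p n" for n
    using prod_fibotomic_prime_power_mult_cong[OF p that(2,1)] by (simp add: prod_power_distrib)
  show ?thesis
    using cong_dvd_divisor_prod_inversion[where P = "coprime p",
        OF prime_elem_const_poly_prime[OF p] not_dvd coprime_divisors[OF dvd_refl] prod_cong]
      assms(2,3) by simp
qed

lemma fibotomic_prime_power_mult_cong_totient:
  fixes p m k :: nat
  assumes p: "prime p" and "coprime p m" and "m \<ge> 2"
  shows "cong_dvd [:int p:] (fibotomic (p ^ k * m)) (fibotomic m ^ totient (p ^ k))"
proof (induction k)
  case (Suc k)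
  show ?case
  proof (cases k)
    case 0
    then show ?thesis
      using fibotomic_prime_mult_cong[OF assms] p by (simp add: totient_prime)
  next
    case (Suc i)
    have "cong_dvd [:int p:] (fibotomic (p ^ (i + 2) * m)) (fibotomic (p ^ (i + 1) * m) ^ p)"
      using fibotomic_prime_power_mult_cong[OF p assms(2)] \<open>m \<ge> 2\<close> by simp
    also have "cong_dvd [:int p:] \<dots> ((fibotomic m ^ totient (p ^ (i + 1))) ^ p)"
      using Suc.IH \<open>k = Suc i\<close> by (intro cong_dvd_power) simp
    also have "(fibotomic m ^ totient (p ^ (i + 1))) ^ p = fibotomic m ^ totient (p ^ (i + 2))"
    proof -
      have "totient (p ^ (i + 2)) = totient (p ^ (i + 1)) * p"
        using totient_prime_power_Suc[OF p, of i] totient_prime_power_Suc[OF p, of "Suc i"]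
        by (simp add: mult_ac)
      then show ?thesis
        by (simp only: power_mult)
    qed
    finally show ?thesis
      using \<open>k = Suc i\<close> by simp
  qed
qed simp

theorem mainTheorem12:
  fixes p m k :: nat
  assumes "prime p" and "m \<ge> 2" and "coprime p m"
  shows "\<forall>i. [coeff (fibotomic (p ^ k * m)) i = coeff (fibotomic m ^ totient (p ^ k)) i] (mod int p)"
  using cong_dvd_const_poly_coeff[OF fibotomic_prime_power_mult_cong_totient[OF assms(1,3,2)]]
  by blast

end
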